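(* Let $p$ be a privacy parameter, let the input domain be $\{D_1,\dots,D_{2^k}\}$ (bit strings of length $k$), and let $\mathcal{M}$ be an algorithm every row of whose matrix representation belongs to the row cone of $\{\mathrm{RR}_p\}$. Suppose the attacker believes the bits of the data $\mathbf{Data}$ are independent and bit $i$ equals $1$ with probability $q_i$. Then for any subset $J=\{\ell_1,\dots,\ell_m\}$ of bit positions such that $q_{\ell_j}\geq p$ or $q_{\ell_j}\leq 1-p$ for every $j=1,\dots,m$: if $P(\mathrm{parity}(J)=0)\geq P(\mathrm{parity}(J)=1)$ then $P(\mathrm{parity}(J)=0\mid\mathcal{M}(\mathbf{Data}))\geq P(\mathrm{parity}(J)=1\mid\mathcal{M}(\mathbf{Data}))$, and if $P(\mathrm{parity}(J)=1)\geq P(\mathrm{parity}(J)=0)$ then $P(\mathrm{parity}(J)=1\mid\mathcal{M}(\mathbf{Data}))\geq P(\mathrm{parity}(J)=0\mid\mathcal{M}(\mathbf{Data}))$. Furthermore, an algorithm $\mathcal{M}$ can provide these guarantees only if every row of its matrix representation belongs to the row cone of $\{\mathrm{RR}_p\}$.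
   Context: $\mathrm{RR}_p$ (randomized response) is the algorithm that, on input a bit string of length $k$, independently flips each bit with probability $1-p$. The matrix representation of an algorithm $\mathcal{M}$ has columns indexed by input datasets, rows indexed by outputs $\omega$, and $(\omega,D)$ entry $P(\mathcal{M}(D)=\omega)$. A privacy definition is a set of algorithms with a common input domain; its consistent normal form is the smallest set containing it closed under post-processing (composition $\mathcal{A}\circ\mathcal{M}$ with any algorithm $\mathcal{A}$ with independent randomness whose domain contains the range of $\mathcal{M}$) and convex combinations (running one member with probability $p$, another with probability $1-p$). The row cone of a privacy definition is the set of vectors $\big(c\,P[\mathcal{M}(D_1)=\omega],\,c\,P[\mathcal{M}(D_2)=\omega],\dots\big)$ with $c\ge0$, $\mathcal{M}$ in its consistent normal form, $\omega$ in the range of $\mathcal{M}$. $\mathrm{parity}(J)$ is the parity (sum mod 2) of the bits of the data in positions $J$. *)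

theory Defs
  imports "HOL-Probability.Probability"
begin

definition dom_k :: "nat \<Rightarrow> bool list set" where
  "dom_k k = {xs. length xs = k}"

fun RR :: "real \<Rightarrow> bool list \<Rightarrow> bool list pmf" where
  "RR p [] = return_pmf []"
| "RR p (x # xs) = bind_pmf (bernoulli_pmf p)
     (\<lambda>b. map_pmf (\<lambda>ys. (if b then x else \<not> x) # ys) (RR p xs))"

text \<open>Consistent normal form of {RR_p}: smallest set of (discrete) algorithms containing RR_p
  (with outputs relabelled injectively into the countable output space nat) closed under
  post-processing and convex combinations.\<close>
inductive_set cnf :: "real \<Rightarrow> (bool list \<Rightarrow> nat pmf) set" for p :: real where
  base: "inj f \<Longrightarrow> (\<lambda>D. map_pmf f (RR p D)) \<in> cnf p"
| post: "M \<in> cnf p \<Longrightarrow> (\<lambda>D. bind_pmf (M D) A) \<in> cnf p"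
| mix: "M1 \<in> cnf p \<Longrightarrow> M2 \<in> cnf p \<Longrightarrow> 0 \<le> a \<Longrightarrow> a \<le> 1 \<Longrightarrow>
        (\<lambda>D. bind_pmf (bernoulli_pmf a) (\<lambda>b. if b then M1 D else M2 D)) \<in> cnf p"

definition row_cone :: "real \<Rightarrow> nat \<Rightarrow> (bool list \<Rightarrow> real) set" where
  "row_cone p k = {v. \<exists>c\<ge>0. \<exists>M\<in>cnf p. \<exists>\<omega>.
      (\<exists>D\<in>dom_k k. \<omega> \<in> set_pmf (M D)) \<and> (\<forall>D\<in>dom_k k. v D = c * pmf (M D) \<omega>)}"

fun ibits :: "(nat \<Rightarrow> real) \<Rightarrow> nat \<Rightarrow> bool list pmf" where
  "ibits q 0 = return_pmf []"
| "ibits q (Suc n) = bind_pmf (ibits q n) (\<lambda>xs. map_pmf (\<lambda>b. xs @ [b]) (bernoulli_pmf (q n)))"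

definition parity :: "nat set \<Rightarrow> bool list \<Rightarrow> nat" where
  "parity J xs = card {i\<in>J. i < length xs \<and> xs ! i} mod 2"

definition joint :: "(nat \<Rightarrow> real) \<Rightarrow> nat \<Rightarrow> (bool list \<Rightarrow> 'b pmf) \<Rightarrow> (bool list \<times> 'b) pmf" where
  "joint q k M = bind_pmf (ibits q k) (\<lambda>D. map_pmf (\<lambda>\<omega>. (D, \<omega>)) (M D))"

definition prior_par :: "(nat \<Rightarrow> real) \<Rightarrow> nat \<Rightarrow> nat set \<Rightarrow> nat \<Rightarrow> real" where
  "prior_par q k J b = measure_pmf.prob (ibits q k) {xs. parity J xs = b}"

definition post_par :: "(nat \<Rightarrow> real) \<Rightarrow> nat \<Rightarrow> (bool list \<Rightarrow> 'b pmf) \<Rightarrow> nat set \<Rightarrow> nat \<Rightarrow> 'b \<Rightarrow> real" where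
  "post_par q k M J b \<omega> =
     measure_pmf.prob (cond_pmf (joint q k M) {z. snd z = \<omega>}) {z. parity J (fst z) = b}"

definition parity_guarantee :: "real \<Rightarrow> nat \<Rightarrow> (bool list \<Rightarrow> 'b pmf) \<Rightarrow> bool" where
  "parity_guarantee p k M \<longleftrightarrow>
    (\<forall>q. (\<forall>i<k. 0 \<le> q i \<and> q i \<le> 1) \<longrightarrow>
      (\<forall>J. J \<subseteq> {..<k} \<longrightarrow> (\<forall>j\<in>J. q j \<ge> p \<or> q j \<le> 1 - p) \<longrightarrow>
        (\<forall>\<omega> \<in> set_pmf (map_pmf snd (joint q k M)).
          (prior_par q k J 0 \<ge> prior_par q k J 1 \<longrightarrow> post_par q k M J 0 \<omega> \<ge> post_par q k M J 1 \<omega>) \<and>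
          (prior_par q k J 1 \<ge> prior_par q k J 0 \<longrightarrow> post_par q k M J 1 \<omega> \<ge> post_par q k M J 0 \<omega>))))"

end

theory Submission
  imports Defs "HOL-Library.Countable"
begin

text \<open>The matrix \<open>R\<close> of \<open>RR\<^sub>p\<close> on bit strings of length \<open>k\<close> is the \<open>k\<close>-th tensor power of
  \<open>[[p, 1-p], [1-p, p]]\<close>, so \<open>W = (2p-1)\<^sup>k R\<inverse>\<close> is the tensor power of \<open>[[p, p-1], [p-1, p]]\<close>.
  A row vector \<open>v\<close> lies in the row cone of \<open>{RR\<^sub>p}\<close> iff \<open>v W \<ge> 0\<close>: the rows of \<open>R\<close> satisfy
  this, post-processing and mixing preserve it, and conversely \<open>v = (v W) R / (2p-1)\<^sup>k\<close> exhibits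
  \<open>v\<close> as a row of a post-processing of \<open>RR\<^sub>p\<close>.

  Under a product prior \<open>q\<close>, the posterior difference of the two values of \<open>parity(J)\<close> given the
  output row \<open>v\<close> is proportional to \<open>\<Sum>\<^sub>D q(D) v(D) (-1) ^ parity J D\<close>. For the rows of \<open>R\<close> this sum
  factors over the bits, and each factor has the sign of the corresponding prior factor as long
  as no \<open>q\<^sub>j\<close> with \<open>j \<in> J\<close> lies strictly between \<open>1-p\<close> and \<open>p\<close>; writing \<open>v\<close> as the
  non-negative combination \<open>(v W) R / (2p-1)\<^sup>k\<close> of such rows gives the guarantee. Conversely,
  for the prior that makes each bit agree with a fixed \<open>\<tau>\<close> with probability \<open>p\<close> and \<open>J\<close> the set
  of all positions, the guarantee says exactly \<open>(v W)(\<tau>) \<ge> 0\<close>.\<close>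

section \<open>Bit strings\<close>

lemma finite_dom_k: "finite (dom_k k)"
  unfolding dom_k_def using finite_lists_length_eq[of "UNIV::bool set" k] by simp

lemma dom_k_Suc: "dom_k (Suc k) = (\<lambda>(xs,b). xs @ [b]) ` (dom_k k \<times> UNIV)"
proof
  show "dom_k (Suc k) \<subseteq> (\<lambda>(xs,b). xs @ [b]) ` (dom_k k \<times> UNIV)"
  proof
    fix D assume "D \<in> dom_k (Suc k)"
    then have "D = butlast D @ [last D]" "butlast D \<in> dom_k k"
      by (auto simp: dom_k_def intro!: append_butlast_last_id[symmetric])
    then show "D \<in> (\<lambda>(xs,b). xs @ [b]) ` (dom_k k \<times> UNIV)"
      by (metis (no_types, lifting) UNIV_I case_prod_conv image_eqI mem_Sigma_iff)
  qed
qed (auto simp: dom_k_def)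

lemma sum_dom_k_prod:
  fixes f :: "nat \<Rightarrow> bool \<Rightarrow> 'a::comm_semiring_1"
  shows "(\<Sum>D\<in>dom_k k. \<Prod>i<k. f i (D!i)) = (\<Prod>i<k. f i True + f i False)"
proof (induction k)
  case 0
  have "dom_k 0 = {[]}" by (auto simp: dom_k_def)
  then show ?case by simp
next
  case (Suc k)
  have inj: "inj_on (\<lambda>(xs,b). xs @ [b]) (dom_k k \<times> (UNIV::bool set))" by (auto simp: inj_on_def)
  have "(\<Sum>D\<in>dom_k (Suc k). \<Prod>i<Suc k. f i (D!i))
      = (\<Sum>z\<in>dom_k k \<times> UNIV. \<Prod>i<Suc k. f i ((fst z @ [snd z])!i))"
    unfolding dom_k_Suc by (subst sum.reindex[OF inj]) (simp add: case_prod_beta)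
  also have "\<dots> = (\<Sum>z\<in>dom_k k \<times> UNIV. (\<Prod>i<k. f i (fst z!i)) * f k (snd z))"
  proof (rule sum.cong[OF refl])
    fix z assume "z \<in> dom_k k \<times> (UNIV::bool set)"
    then have l: "length (fst z) = k" by (auto simp: dom_k_def)
    have "(\<Prod>i<k. f i ((fst z @ [snd z])!i)) = (\<Prod>i<k. f i (fst z!i))"
      by (rule prod.cong) (auto simp: nth_append l)
    then show "(\<Prod>i<Suc k. f i ((fst z @ [snd z])!i)) = (\<Prod>i<k. f i (fst z!i)) * f k (snd z)"
      by (simp add: l nth_append)
  qed
  also have "\<dots> = (\<Sum>xs\<in>dom_k k. \<Sum>b\<in>UNIV. (\<Prod>i<k. f i (xs!i)) * f k b)"
    by (simp add: sum.cartesian_product case_prod_beta)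
  also have "\<dots> = (\<Sum>xs\<in>dom_k k. (\<Prod>i<k. f i (xs!i))) * (f k True + f k False)"
    by (simp add: UNIV_bool sum_distrib_left sum_distrib_right algebra_simps sum.distrib)
  finally show ?case using Suc by simp
qed

lemma parity_sign_eq_prod:
  assumes "length D = k"
  shows "(-1::real) ^ parity J D = (\<Prod>i<k. if i \<in> J \<and> D!i then -1 else 1)"
proof -
  let ?S = "{i\<in>J. i < length D \<and> D!i}"
  have "(\<Prod>i<k. if i \<in> J \<and> D!i then -1 else (1::real))
      = (\<Prod>i\<in>{..<k} \<inter> {i. i \<in> J \<and> D!i}. -1) * (\<Prod>i\<in>{..<k} \<inter> -{i. i \<in> J \<and> D!i}. 1)"
    by (rule prod.If_cases) simp
  also have "{..<k} \<inter> {i. i \<in> J \<and> D!i} = ?S" using assms by auto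
  finally show ?thesis by (simp add: parity_def minus_one_power_iff)
qed

lemma sum_parity_split:
  fixes f :: "bool list \<Rightarrow> real"
  assumes "finite A"
  shows "(\<Sum>D\<in>{D\<in>A. parity J D = 0}. f D) - (\<Sum>D\<in>{D\<in>A. parity J D = 1}. f D)
       = (\<Sum>D\<in>A. f D * (-1) ^ parity J D)"
proof -
  have parity_cases: "parity J D \<noteq> 0 \<longleftrightarrow> parity J D = 1" for D by (auto simp: parity_def)
  have "(\<Sum>D\<in>A. f D * (-1) ^ parity J D) = (\<Sum>D\<in>A. if parity J D = 0 then f D else - f D)"
  proof (rule sum.cong[OF refl])
    fix D
    show "f D * (-1) ^ parity J D = (if parity J D = 0 then f D else - f D)"
      using parity_cases[of D] by auto
  qed
  also have "\<dots> = (\<Sum>D\<in>A \<inter> {D. parity J D = 0}. f D) + (\<Sum>D\<in>A \<inter> - {D. parity J D = 0}. - f D)"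
    by (rule sum.If_cases) (rule assms)
  also have "A \<inter> - {D. parity J D = 0} = {D\<in>A. parity J D = 1}" using parity_cases by auto
  also have "A \<inter> {D. parity J D = 0} = {D\<in>A. parity J D = 0}" by auto
  finally show ?thesis by (simp add: sum_negf)
qed

section \<open>The matrix of randomized response and its inverse\<close>

definition flip_weight :: "real \<Rightarrow> bool \<Rightarrow> bool \<Rightarrow> real" where
  "flip_weight p a t = (if a = t then p else 1 - p)"

text \<open>\<open>(2p-1)\<close> times the inverse of \<open>[[p,1-p],[1-p,p]]\<close>.\<close>
definition dual_flip_weight :: "real \<Rightarrow> bool \<Rightarrow> bool \<Rightarrow> real" where
  "dual_flip_weight p a t = (if a = t then p else p - 1)"

definition RR_matrix :: "real \<Rightarrow> bool list \<Rightarrow> bool list \<Rightarrow> real" where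
  "RR_matrix p D \<tau> = (\<Prod>i<length D. flip_weight p (D!i) (\<tau>!i))"

definition RR_dual :: "real \<Rightarrow> bool list \<Rightarrow> bool list \<Rightarrow> real" where
  "RR_dual p D \<tau> = (\<Prod>i<length D. dual_flip_weight p (D!i) (\<tau>!i))"

definition dual_coord :: "real \<Rightarrow> nat \<Rightarrow> (bool list \<Rightarrow> real) \<Rightarrow> bool list \<Rightarrow> real" where
  "dual_coord p k v \<tau> = (\<Sum>D\<in>dom_k k. v D * RR_dual p D \<tau>)"

lemma RR_matrix_sym: "length D = length \<tau> \<Longrightarrow> RR_matrix p D \<tau> = RR_matrix p \<tau> D"
  unfolding RR_matrix_def flip_weight_def by (simp add: eq_commute)

lemma RR_dual_sym: "length D = length \<tau> \<Longrightarrow> RR_dual p D \<tau> = RR_dual p \<tau> D"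
  unfolding RR_dual_def dual_flip_weight_def by (simp add: eq_commute)

lemma pmf_map_Cons: "pmf (map_pmf (Cons c) X) (t # ts) = (if c = t then pmf X ts else 0)"
  by (cases "c = t") (auto simp: pmf_map_inj' inj_def intro!: pmf_map_outside)

lemma pmf_RR:
  assumes "0 \<le> p" "p \<le> 1"
  shows "pmf (RR p D) \<tau> = (if length \<tau> = length D then RR_matrix p D \<tau> else 0)"
proof (induction D arbitrary: \<tau>)
  case Nil then show ?case by (cases \<tau>) (auto simp: RR_matrix_def)
next
  case (Cons x xs)
  have bind: "pmf (RR p (x # xs)) \<tau>
      = pmf (map_pmf (Cons x) (RR p xs)) \<tau> * p + pmf (map_pmf (Cons (\<not> x)) (RR p xs)) \<tau> * (1 - p)"
    using assms by (simp add: pmf_bind)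
  show ?case
  proof (cases \<tau>)
    case Nil
    have "pmf (map_pmf (Cons c) X) [] = 0" for c and X :: "bool list pmf"
      by (rule pmf_map_outside) auto
    then show ?thesis using bind Nil by simp
  next
    case (Cons t ts)
    have "RR_matrix p (x # xs) (t # ts) = flip_weight p x t * RR_matrix p xs ts"
      unfolding RR_matrix_def length_Cons prod.lessThan_Suc_shift by simp
    then show ?thesis using bind Cons.IH unfolding Cons by (auto simp: pmf_map_Cons flip_weight_def)
  qed
qed

lemma RR_matrix_dual_orthogonal:
  assumes "D \<in> dom_k k" "D' \<in> dom_k k"
  shows "(\<Sum>\<tau>\<in>dom_k k. RR_matrix p D \<tau> * RR_dual p D' \<tau>) = (if D = D' then (2*p - 1) ^ k else 0)"
proof -
  have l: "length D = k" "length D' = k" using assms by (auto simp: dom_k_def)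
  have "(\<Sum>\<tau>\<in>dom_k k. RR_matrix p D \<tau> * RR_dual p D' \<tau>)
      = (\<Sum>\<tau>\<in>dom_k k. \<Prod>i<k. flip_weight p (D!i) (\<tau>!i) * dual_flip_weight p (D'!i) (\<tau>!i))"
    unfolding RR_matrix_def RR_dual_def l by (simp add: prod.distrib)
  also have "\<dots> = (\<Prod>i<k. flip_weight p (D!i) True * dual_flip_weight p (D'!i) True
                           + flip_weight p (D!i) False * dual_flip_weight p (D'!i) False)"
    by (rule sum_dom_k_prod)
  also have "\<dots> = (\<Prod>i<k. if D!i = D'!i then 2*p - 1 else 0)"
    by (rule prod.cong) (auto simp: flip_weight_def dual_flip_weight_def algebra_simps)
  also have "\<dots> = (if D = D' then (2*p - 1) ^ k else 0)"
  proof (cases "D = D'")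
    case False
    then obtain i where "i < k" "D!i \<noteq> D'!i" using l nth_equalityI[of D D'] by auto
    then show ?thesis using False by (intro trans[OF prod_zero]) auto
  qed simp
  finally show ?thesis .
qed

lemma RR_dual_inversion:
  assumes "D \<in> dom_k k"
  shows "(\<Sum>\<tau>\<in>dom_k k. dual_coord p k v \<tau> * RR_matrix p D \<tau>) = (2*p - 1) ^ k * v D"
proof -
  have "(\<Sum>\<tau>\<in>dom_k k. dual_coord p k v \<tau> * RR_matrix p D \<tau>)
      = (\<Sum>D'\<in>dom_k k. v D' * (\<Sum>\<tau>\<in>dom_k k. RR_matrix p D \<tau> * RR_dual p D' \<tau>))"
    unfolding dual_coord_def sum_distrib_left sum_distrib_right
    by (subst sum.swap) (simp add: algebra_simps)
  also have "\<dots> = (\<Sum>D'\<in>dom_k k. v D' * (if D = D' then (2*p - 1) ^ k else 0))"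
    using RR_matrix_dual_orthogonal[OF assms] by simp
  also have "\<dots> = (2*p - 1) ^ k * v D"
    using assms by (simp add: finite_dom_k if_distrib cong: if_cong)
  finally show ?thesis .
qed

section \<open>The row cone\<close>

lemma integrable_pmf_times_bounded:
  fixes g :: "'a \<Rightarrow> real"
  assumes "\<And>u. 0 \<le> g u \<and> g u \<le> 1"
  shows "integrable (count_space UNIV) (\<lambda>u. pmf P u * g u)"
proof (rule Bochner_Integration.integrable_bound[OF integrable_pmf])
  show "AE u in count_space UNIV. norm (pmf P u * g u) \<le> norm (pmf P u)"
    using assms by (intro AE_I2) (simp add: abs_mult mult_left_le)
qed simp

lemma dual_coord_RR_nonneg:
  assumes "1/2 \<le> p" "p \<le> 1" "\<tau> \<in> dom_k k"
  shows "0 \<le> dual_coord p k (\<lambda>D. pmf (RR p D) \<sigma>) \<tau>"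
proof (cases "\<sigma> \<in> dom_k k")
  case True
  have "dual_coord p k (\<lambda>D. pmf (RR p D) \<sigma>) \<tau> = (\<Sum>D\<in>dom_k k. RR_matrix p \<sigma> D * RR_dual p \<tau> D)"
    unfolding dual_coord_def using True assms
    by (intro sum.cong) (auto simp: pmf_RR dom_k_def RR_matrix_sym RR_dual_sym)
  also have "\<dots> = (if \<sigma> = \<tau> then (2*p - 1) ^ k else 0)"
    by (rule RR_matrix_dual_orthogonal[OF True assms(3)])
  finally show ?thesis using assms(1) by simp
next
  case False
  then show ?thesis using assms by (simp add: dual_coord_def pmf_RR dom_k_def)
qed

lemma dual_coord_bind_nonneg:
  assumes "\<And>u. 0 \<le> dual_coord p k (\<lambda>D. pmf (M D) u) \<tau>"
  shows "0 \<le> dual_coord p k (\<lambda>D. pmf (bind_pmf (M D) A) \<omega>) \<tau>"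
proof -
  let ?g = "\<lambda>u. pmf (A u) \<omega>"
  have g: "0 \<le> ?g u \<and> ?g u \<le> 1" for u by (simp add: pmf_le_1)
  have "dual_coord p k (\<lambda>D. pmf (bind_pmf (M D) A) \<omega>) \<tau>
      = (\<Sum>D\<in>dom_k k. \<integral>u. pmf (M D) u * ?g u * RR_dual p D \<tau> \<partial>count_space UNIV)"
    by (simp add: dual_coord_def pmf_bind measure_pmf_eq_density integral_density)
  also have "\<dots> = (\<integral>u. (\<Sum>D\<in>dom_k k. pmf (M D) u * ?g u * RR_dual p D \<tau>) \<partial>count_space UNIV)"
    by (rule Bochner_Integration.integral_sum[symmetric])
      (intro integrable_mult_left integrable_pmf_times_bounded g)
  also have "\<dots> = (\<integral>u. ?g u * dual_coord p k (\<lambda>D. pmf (M D) u) \<tau> \<partial>count_space UNIV)"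
    by (simp add: dual_coord_def sum_distrib_left algebra_simps)
  also have "0 \<le> \<dots>"
    using assms g by (intro Bochner_Integration.integral_nonneg mult_nonneg_nonneg) auto
  finally show ?thesis .
qed

lemma dual_coord_cnf_nonneg:
  assumes "M \<in> cnf p" "1/2 \<le> p" "p \<le> 1" "\<tau> \<in> dom_k k"
  shows "0 \<le> dual_coord p k (\<lambda>D. pmf (M D) \<omega>) \<tau>"
  using assms(1)
proof (induction arbitrary: \<omega> rule: cnf.induct)
  case (base f)
  show ?case
  proof (cases "\<omega> \<in> range f")
    case True
    then obtain \<sigma> where "\<omega> = f \<sigma>" by blast
    then show ?thesis
      using dual_coord_RR_nonneg[OF assms(2-4)] by (simp add: pmf_map_inj'[OF base])
  next
    case False
    then have "pmf (map_pmf f (RR p D)) \<omega> = 0" for D by (auto intro: pmf_map_outside)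
    then show ?thesis by (simp add: dual_coord_def)
  qed
next
  case (post M A)
  from post.IH show ?case by (rule dual_coord_bind_nonneg)
next
  case (mix M1 M2 a)
  have "pmf (bind_pmf (bernoulli_pmf a) (\<lambda>b. if b then M1 D else M2 D)) \<omega> * RR_dual p D \<tau>
      = a * (pmf (M1 D) \<omega> * RR_dual p D \<tau>) + (1 - a) * (pmf (M2 D) \<omega> * RR_dual p D \<tau>)" for D
    using mix.hyps by (simp add: pmf_bind algebra_simps)
  then have "dual_coord p k (\<lambda>D. pmf (bind_pmf (bernoulli_pmf a) (\<lambda>b. if b then M1 D else M2 D)) \<omega>) \<tau>
      = a * dual_coord p k (\<lambda>D. pmf (M1 D) \<omega>) \<tau> + (1 - a) * dual_coord p k (\<lambda>D. pmf (M2 D) \<omega>) \<tau>"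
    by (simp add: dual_coord_def sum.distrib sum_distrib_left)
  also have "0 \<le> \<dots>" using mix.IH mix.hyps by simp
  finally show ?case .
qed

text \<open>Run \<open>RR\<^sub>p\<close> and then output \<open>0\<close> with probability \<open>y \<tau>\<close> on response \<open>\<tau>\<close>; the row of output \<open>0\<close> is
  \<open>R y\<close>.\<close>
definition RR_accept :: "real \<Rightarrow> (bool list \<Rightarrow> real) \<Rightarrow> bool list \<Rightarrow> nat pmf" where
  "RR_accept p y D = bind_pmf (map_pmf to_nat (RR p D))
     (\<lambda>n. map_pmf (\<lambda>b. if b then 0 else 1) (bernoulli_pmf (y (from_nat n))))"

lemma RR_accept_cnf: "RR_accept p y \<in> cnf p"
proof -
  have "(\<lambda>D. map_pmf to_nat (RR p D)) \<in> cnf p" by (rule cnf.base) simp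
  then show ?thesis unfolding RR_accept_def[abs_def] by (rule cnf.post)
qed

lemma pmf_RR_accept_0:
  assumes "0 \<le> p" "p \<le> 1" "\<And>\<tau>. 0 \<le> y \<tau> \<and> y \<tau> \<le> 1" "D \<in> dom_k k"
  shows "pmf (RR_accept p y D) 0 = (\<Sum>\<tau>\<in>dom_k k. y \<tau> * RR_matrix p D \<tau>)"
proof -
  have accept: "pmf (map_pmf (\<lambda>b. if b then 0 else 1) (bernoulli_pmf r)) (0::nat) = r"
    if "0 \<le> r" "r \<le> 1" for r
  proof -
    have "(\<lambda>b::bool. if b then 0 else 1::nat) -` {0} = {True}" by (auto split: if_splits)
    then show ?thesis using that by (simp add: pmf_map measure_pmf_single)
  qed
  have "pmf (RR_accept p y D) 0 = (\<integral>\<tau>. y \<tau> \<partial>RR p D)"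
    unfolding RR_accept_def bind_map_pmf pmf_bind using assms(3) by (simp add: accept)
  also have "\<dots> = (\<Sum>\<tau>\<in>dom_k k. y \<tau> * pmf (RR p D) \<tau>)"
    using assms by (intro integral_measure_pmf_real[OF finite_dom_k])
      (auto simp: finite_dom_k pmf_RR dom_k_def set_pmf_iff split: if_splits)
  also have "\<dots> = (\<Sum>\<tau>\<in>dom_k k. y \<tau> * RR_matrix p D \<tau>)"
    using assms by (intro sum.cong) (auto simp: pmf_RR dom_k_def)
  finally show ?thesis .
qed

lemma row_cone_if_vanishing:
  assumes "0 \<le> p" "p \<le> 1" "\<forall>D\<in>dom_k k. v D = 0"
  shows "v \<in> row_cone p k"
proof -
  let ?D = "replicate k True"
  have D: "?D \<in> dom_k k" by (simp add: dom_k_def)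
  obtain \<tau> where "\<tau> \<in> set_pmf (RR p ?D)" using set_pmf_not_empty by fast
  then have support: "to_nat \<tau> \<in> set_pmf (map_pmf to_nat (RR p ?D))" by simp
  have cnf: "(\<lambda>D. map_pmf to_nat (RR p D)) \<in> cnf p" by (rule cnf.base) simp
  show ?thesis
    unfolding row_cone_def using D assms(3) support cnf by (intro CollectI exI[of _ 0]) fastforce
qed

lemma row_cone_if_dual_coord_nonneg:
  assumes p: "1/2 < p" "p \<le> 1" and dual: "\<forall>\<tau>\<in>dom_k k. 0 \<le> dual_coord p k v \<tau>"
    and D0: "D0 \<in> dom_k k" "v D0 \<noteq> 0"
  shows "v \<in> row_cone p k"
proof -
  let ?L = "dual_coord p k v"
  define c where "c = (2*p - 1) ^ k"
  define Y where "Y = (\<Sum>\<tau>\<in>dom_k k. ?L \<tau>)"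
  have c: "0 < c" using p by (simp add: c_def)
  have inversion: "(\<Sum>\<tau>\<in>dom_k k. ?L \<tau> * RR_matrix p D \<tau>) = c * v D" if "D \<in> dom_k k" for D
    unfolding c_def by (rule RR_dual_inversion[OF that])
  have Y: "0 < Y"
  proof (rule ccontr)
    assume "\<not> 0 < Y"
    then have "\<forall>\<tau>\<in>dom_k k. ?L \<tau> = 0"
      using dual sum_nonneg_eq_0_iff[OF finite_dom_k] unfolding Y_def
      by (metis (no_types, lifting) order.antisym not_le sum_nonneg)
    then show False using inversion[OF D0(1)] c D0(2) by simp
  qed
  define y where "y \<tau> = (if \<tau> \<in> dom_k k then ?L \<tau> / Y else 0)" for \<tau>
  have y: "0 \<le> y \<tau> \<and> y \<tau> \<le> 1" for \<tau>
  proof (cases "\<tau> \<in> dom_k k")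
    case True
    have "?L \<tau> \<le> Y" unfolding Y_def using True dual by (intro member_le_sum finite_dom_k) auto
    then show ?thesis using True dual Y by (simp add: y_def)
  qed (simp add: y_def)
  have row: "pmf (RR_accept p y D) 0 = c * v D / Y" if "D \<in> dom_k k" for D
    using p that y inversion[OF that]
    by (simp add: pmf_RR_accept_0 y_def sum_divide_distrib[symmetric] cong: sum.cong)
  have "0 \<in> set_pmf (RR_accept p y D0)"
    using row[OF D0(1)] c Y D0(2) by (simp add: set_pmf_iff)
  moreover have "\<forall>D\<in>dom_k k. v D = Y / c * pmf (RR_accept p y D) 0"
    using row c Y by simp
  ultimately show ?thesis
    unfolding row_cone_def using RR_accept_cnf D0(1) c Y by (intro CollectI exI[of _ "Y / c"]) auto
qed

lemma row_cone_iff_dual_coord_nonneg: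
  assumes "1/2 < p" "p \<le> 1"
  shows "v \<in> row_cone p k \<longleftrightarrow> (\<forall>\<tau>\<in>dom_k k. 0 \<le> dual_coord p k v \<tau>)"
proof
  assume "v \<in> row_cone p k"
  then obtain c M \<omega> where c: "0 \<le> c" "M \<in> cnf p" and v: "\<forall>D\<in>dom_k k. v D = c * pmf (M D) \<omega>"
    unfolding row_cone_def by blast
  have "dual_coord p k v \<tau> = c * dual_coord p k (\<lambda>D. pmf (M D) \<omega>) \<tau>" for \<tau>
    unfolding dual_coord_def sum_distrib_left using v by (intro sum.cong) auto
  then show "\<forall>\<tau>\<in>dom_k k. 0 \<le> dual_coord p k v \<tau>"
    using c assms dual_coord_cnf_nonneg by simp
next
  assume "\<forall>\<tau>\<in>dom_k k. 0 \<le> dual_coord p k v \<tau>"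
  then show "v \<in> row_cone p k"
    using assms row_cone_if_vanishing row_cone_if_dual_coord_nonneg by (cases "\<forall>D\<in>dom_k k. v D = 0") auto
qed

section \<open>Parity under a product prior\<close>

definition prior_weight :: "(nat \<Rightarrow> real) \<Rightarrow> bool list \<Rightarrow> real" where
  "prior_weight q D = (\<Prod>i<length D. if D!i then q i else 1 - q i)"

definition parity_bias :: "(nat \<Rightarrow> real) \<Rightarrow> nat \<Rightarrow> nat set \<Rightarrow> (bool list \<Rightarrow> real) \<Rightarrow> real" where
  "parity_bias q k J v = (\<Sum>D\<in>dom_k k. prior_weight q D * v D * (-1) ^ parity J D)"

definition sign_follows :: "real \<Rightarrow> real \<Rightarrow> bool" where
  "sign_follows a b \<longleftrightarrow> (0 \<le> a \<longrightarrow> 0 \<le> b) \<and> (a \<le> 0 \<longrightarrow> b \<le> 0)"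

lemma pmf_map_snoc:
  "pmf (map_pmf (\<lambda>b. xs @ [b]) X) D = (if D \<noteq> [] \<and> butlast D = xs then pmf X (last D) else 0)"
proof (cases "D \<noteq> [] \<and> butlast D = xs")
  case True
  then have "D = xs @ [last D]" by (metis append_butlast_last_id)
  moreover have "pmf (map_pmf (\<lambda>b. xs @ [b]) X) (xs @ [last D]) = pmf X (last D)"
    by (rule pmf_map_inj') (auto simp: inj_def)
  ultimately show ?thesis using True by metis
qed (auto intro: pmf_map_outside)

lemma pmf_ibits:
  assumes "\<forall>i<k. 0 \<le> q i \<and> q i \<le> 1"
  shows "pmf (ibits q k) D = (if length D = k then prior_weight q D else 0)"
  using assms
proof (induction k arbitrary: D)
  case 0 then show ?case by (cases D) (auto simp: prior_weight_def)
next
  case (Suc n)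
  have q: "0 \<le> q n" "q n \<le> 1" using Suc.prems by auto
  have "pmf (ibits q (Suc n)) D
      = (\<integral>xs. (if D \<noteq> [] \<and> butlast D = xs then pmf (bernoulli_pmf (q n)) (last D) else 0) \<partial>ibits q n)"
    by (simp add: pmf_bind pmf_map_snoc)
  also have "\<dots> = (if D \<noteq> [] then pmf (bernoulli_pmf (q n)) (last D) * pmf (ibits q n) (butlast D) else 0)"
    by (subst integral_measure_pmf_real[of "{butlast D}"]) (auto split: if_splits)
  also have "\<dots> = (if length D = Suc n then prior_weight q D else 0)"
  proof (cases "length D = Suc n")
    case True
    then have D: "D = butlast D @ [last D]" "D \<noteq> []" "length (butlast D) = n"
      by (auto intro!: append_butlast_last_id[symmetric])
    have "prior_weight q D = prior_weight q (butlast D) * (if last D then q n else 1 - q n)"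
      unfolding prior_weight_def using True D(3) by (subst (1 2) D(1)) (simp add: nth_append)
    then show ?thesis using D q Suc.IH[of "butlast D"] Suc.prems by (cases "last D") (auto simp: True)
  qed (use Suc in auto)
  finally show ?case .
qed

lemma set_ibits_subset:
  assumes "\<forall>i<k. 0 \<le> q i \<and> q i \<le> 1"
  shows "set_pmf (ibits q k) \<subseteq> dom_k k"
  using pmf_ibits[OF assms] by (auto simp: set_pmf_iff dom_k_def split: if_splits)

lemma prob_eq_sum_pmf:
  assumes "finite A" "set_pmf P \<subseteq> A"
  shows "measure_pmf.prob P B = (\<Sum>x\<in>{x\<in>A. x \<in> B}. pmf P x)"
proof -
  have "measure_pmf.prob P B = measure_pmf.prob P (B \<inter> set_pmf P)"
    by (simp add: measure_Int_set_pmf)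
  also have "B \<inter> set_pmf P = {x\<in>A. x \<in> B} \<inter> set_pmf P" using assms by auto
  also have "measure_pmf.prob P \<dots> = (\<Sum>x\<in>{x\<in>A. x \<in> B}. pmf P x)"
    using assms by (simp add: measure_Int_set_pmf measure_measure_pmf_finite)
  finally show ?thesis .
qed

lemma prior_par_diff:
  assumes "\<forall>i<k. 0 \<le> q i \<and> q i \<le> 1"
  shows "prior_par q k J 0 - prior_par q k J 1 = parity_bias q k J (\<lambda>_. 1)"
proof -
  have prior: "prior_par q k J b = (\<Sum>D\<in>{D\<in>dom_k k. parity J D = b}. prior_weight q D)" for b
    unfolding prior_par_def using assms
    by (subst prob_eq_sum_pmf[OF finite_dom_k set_ibits_subset[OF assms]])
      (auto simp: pmf_ibits dom_k_def intro: sum.cong)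
  show ?thesis
    unfolding parity_bias_def mult_1_right prior by (rule sum_parity_split[OF finite_dom_k])
qed

lemma pmf_joint: "pmf (joint q k M) (D, \<omega>) = pmf (ibits q k) D * pmf (M D) \<omega>"
proof -
  have "pmf (map_pmf (Pair D') (M D')) (D, \<omega>) = (if D' = D then pmf (M D) \<omega> else 0)" for D'
    by (cases "D' = D") (auto simp: pmf_map_inj' inj_def intro: pmf_map_outside)
  then have "pmf (joint q k M) (D, \<omega>) = (\<integral>D'. (if D' = D then pmf (M D) \<omega> else 0) \<partial>ibits q k)"
    unfolding joint_def pmf_bind by simp
  also have "\<dots> = pmf (ibits q k) D * pmf (M D) \<omega>"
    by (subst integral_measure_pmf_real[of "{D}"]) (auto split: if_splits)
  finally show ?thesis .
qed

lemma set_joint: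
  "set_pmf (joint q k M) = {z. fst z \<in> set_pmf (ibits q k) \<and> snd z \<in> set_pmf (M (fst z))}"
  unfolding joint_def by auto

lemma post_par_eq:
  assumes q: "\<forall>i<k. 0 \<le> q i \<and> q i \<le> 1" and \<omega>: "\<omega> \<in> set_pmf (map_pmf snd (joint q k M))"
  shows "post_par q k M J b \<omega> =
    (\<Sum>D\<in>{D\<in>dom_k k. parity J D = b}. prior_weight q D * pmf (M D) \<omega>)
      / measure_pmf.prob (joint q k M) {z. snd z = \<omega>}"
proof -
  let ?A = "{z. snd z = \<omega>}"
  let ?d = "measure_pmf.prob (joint q k M) ?A"
  have ne: "set_pmf (joint q k M) \<inter> ?A \<noteq> {}" using \<omega> by auto
  have sub: "set_pmf (cond_pmf (joint q k M) ?A) \<subseteq> dom_k k \<times> {\<omega>}"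
    using set_ibits_subset[OF q] ne by (auto simp: set_cond_pmf[OF ne] set_joint)
  have "post_par q k M J b \<omega>
      = (\<Sum>z\<in>{z\<in>dom_k k \<times> {\<omega>}. parity J (fst z) = b}. pmf (cond_pmf (joint q k M) ?A) z)"
    unfolding post_par_def by (subst prob_eq_sum_pmf[OF _ sub]) (auto simp: finite_dom_k)
  also have "{z\<in>dom_k k \<times> {\<omega>}. parity J (fst z) = b} = (\<lambda>D. (D, \<omega>)) ` {D\<in>dom_k k. parity J D = b}"
    by auto
  also have "(\<Sum>z\<in>\<dots>. pmf (cond_pmf (joint q k M) ?A) z)
      = (\<Sum>D\<in>{D\<in>dom_k k. parity J D = b}. pmf (joint q k M) (D, \<omega>) / ?d)"
    by (subst sum.reindex) (auto simp: inj_on_def pmf_cond[OF ne])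
  also have "\<dots> = (\<Sum>D\<in>{D\<in>dom_k k. parity J D = b}. prior_weight q D * pmf (M D) \<omega>) / ?d"
    by (simp add: sum_divide_distrib pmf_joint pmf_ibits[OF q] dom_k_def)
  finally show ?thesis .
qed

lemma post_par_diff:
  assumes "\<forall>i<k. 0 \<le> q i \<and> q i \<le> 1" "\<omega> \<in> set_pmf (map_pmf snd (joint q k M))"
  shows "post_par q k M J 0 \<omega> - post_par q k M J 1 \<omega>
     = parity_bias q k J (\<lambda>D. pmf (M D) \<omega>) / measure_pmf.prob (joint q k M) {z. snd z = \<omega>}"
  unfolding post_par_eq[OF assms] diff_divide_distrib[symmetric] parity_bias_def
    sum_parity_split[OF finite_dom_k] ..

lemma set_pmf_snd_joint_subset:
  assumes "\<forall>i<k. 0 \<le> q i \<and> q i \<le> 1"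
  shows "set_pmf (map_pmf snd (joint q k M)) \<subseteq> (\<Union>D\<in>dom_k k. set_pmf (M D))"
  using set_ibits_subset[OF assms] by (auto simp: set_joint)

lemma set_pmf_snd_joint_interior:
  assumes "\<forall>i<k. 0 < q i \<and> q i < 1" "D \<in> dom_k k" "\<omega> \<in> set_pmf (M D)"
  shows "\<omega> \<in> set_pmf (map_pmf snd (joint q k M))"
proof -
  have "0 < prior_weight q D"
    unfolding prior_weight_def using assms by (intro prod_pos) (auto simp: dom_k_def)
  then have "D \<in> set_pmf (ibits q k)"
    using assms by (simp add: set_pmf_iff pmf_ibits less_imp_le dom_k_def)
  then show ?thesis
    using assms(3) by (auto simp: set_joint intro!: image_eqI[of _ snd "(D, \<omega>)"])
qed

lemma sign_follows_divide_pos: "0 < d \<Longrightarrow> sign_follows a (b / d) \<longleftrightarrow> sign_follows a b"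
  by (simp add: sign_follows_def zero_le_divide_iff divide_le_0_iff)

lemma sign_follows_mult_pos: "0 < c \<Longrightarrow> sign_follows a (c * b) \<longleftrightarrow> sign_follows a b"
  by (simp add: sign_follows_def zero_le_mult_iff mult_le_0_iff)

lemma parity_guarantee_iff_sign_follows:
  "parity_guarantee p k M \<longleftrightarrow>
    (\<forall>q. (\<forall>i<k. 0 \<le> q i \<and> q i \<le> 1) \<longrightarrow>
      (\<forall>J. J \<subseteq> {..<k} \<longrightarrow> (\<forall>j\<in>J. q j \<ge> p \<or> q j \<le> 1 - p) \<longrightarrow>
        (\<forall>\<omega> \<in> set_pmf (map_pmf snd (joint q k M)).
          sign_follows (parity_bias q k J (\<lambda>_. 1)) (parity_bias q k J (\<lambda>D. pmf (M D) \<omega>)))))"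
proof -
  have "sign_follows (prior_par q k J 0 - prior_par q k J 1) (post_par q k M J 0 \<omega> - post_par q k M J 1 \<omega>)
      = sign_follows (parity_bias q k J (\<lambda>_. 1)) (parity_bias q k J (\<lambda>D. pmf (M D) \<omega>))"
    if q: "\<forall>i<k. 0 \<le> q i \<and> q i \<le> 1" and \<omega>: "\<omega> \<in> set_pmf (map_pmf snd (joint q k M))" for q J \<omega>
  proof -
    have "0 < measure_pmf.prob (joint q k M) {z. snd z = \<omega>}"
      using \<omega> by (auto intro!: measure_pmf_posI)
    then show ?thesis
      unfolding prior_par_diff[OF q] post_par_diff[OF q \<omega>] by (rule sign_follows_divide_pos)
  qed
  moreover have "(a \<le> b \<longrightarrow> c \<le> d) \<and> (b \<le> a \<longrightarrow> d \<le> c) \<longleftrightarrow> sign_follows (b - a) (d - c)"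
    for a b c d :: real
    by (auto simp: sign_follows_def)
  ultimately show ?thesis unfolding parity_guarantee_def by (auto simp del: diff_ge_0_iff_ge)
qed

section \<open>Sign of the parity bias\<close>

lemma parity_bias_prod:
  fixes h :: "nat \<Rightarrow> bool \<Rightarrow> real"
  shows "parity_bias q k J (\<lambda>D. \<Prod>i<k. h i (D!i)) =
     (\<Prod>i<k. q i * h i True * (if i \<in> J then -1 else 1) + (1 - q i) * h i False)"
proof -
  have "parity_bias q k J (\<lambda>D. \<Prod>i<k. h i (D!i)) =
    (\<Sum>D\<in>dom_k k. \<Prod>i<k. (if D!i then q i else 1 - q i) * h i (D!i) * (if i \<in> J \<and> D!i then -1 else 1))"
    unfolding parity_bias_def
  proof (rule sum.cong[OF refl])
    fix D assume "D \<in> dom_k k"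
    then have l: "length D = k" by (simp add: dom_k_def)
    show "prior_weight q D * (\<Prod>i<k. h i (D!i)) * (-1) ^ parity J D =
      (\<Prod>i<k. (if D!i then q i else 1 - q i) * h i (D!i) * (if i \<in> J \<and> D!i then -1 else 1))"
      unfolding parity_sign_eq_prod[OF l] prior_weight_def l by (simp add: prod.distrib)
  qed
  also have "\<dots> = (\<Prod>i<k. q i * h i True * (if i \<in> J then -1 else 1) + (1 - q i) * h i False)"
    by (subst sum_dom_k_prod) (rule prod.cong, auto)
  finally show ?thesis .
qed

lemma sign_follows_prod:
  fixes e f :: "nat \<Rightarrow> real"
  assumes "\<And>i. i \<in> I \<Longrightarrow> e i \<noteq> 0 \<and> 0 \<le> e i * f i"
  shows "sign_follows (\<Prod>i\<in>I. e i) (\<Prod>i\<in>I. f i)"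
proof -
  have "0 \<le> (\<Prod>i\<in>I. e i * f i)" using assms by (intro prod_nonneg) auto
  then have "0 \<le> (\<Prod>i\<in>I. e i) * (\<Prod>i\<in>I. f i)" by (simp add: prod.distrib)
  moreover have "(\<Prod>i\<in>I. e i) \<noteq> 0" using assms by (cases "finite I") auto
  ultimately show ?thesis
    unfolding sign_follows_def by (smt (verit) zero_le_mult_iff)
qed

text \<open>For \<open>\<sigma> = -1\<close> the prior factor \<open>1 - 2r\<close> changes sign at \<open>r = 1/2\<close>, the other factor at
  \<open>r = p\<close> or \<open>r = 1-p\<close>; the two agree in sign exactly outside the band between \<open>1-p\<close> and \<open>p\<close>.\<close>
lemma bit_factor_sign:
  assumes "1/2 < p" "p \<le> 1" "0 \<le> r" "r \<le> 1"
    and "\<sigma> = 1 \<or> (\<sigma> = -1 \<and> (p \<le> r \<or> r \<le> 1 - p))"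
  shows "r * \<sigma> + (1 - r) \<noteq> 0
    \<and> 0 \<le> (r * \<sigma> + (1 - r)) * (r * flip_weight p True t * \<sigma> + (1 - r) * flip_weight p False t)"
  using assms(5)
proof
  assume "\<sigma> = 1"
  then show ?thesis using assms(1-4) by (simp add: flip_weight_def)
next
  assume \<sigma>: "\<sigma> = -1 \<and> (p \<le> r \<or> r \<le> 1 - p)"
  have "(r * flip_weight p True t * \<sigma> + (1 - r) * flip_weight p False t) = (if t then 1 - p - r else p - r)"
    using \<sigma> by (simp add: flip_weight_def algebra_simps)
  moreover have "r * \<sigma> + (1 - r) = 1 - 2 * r" using \<sigma> by simp
  ultimately show ?thesis
    using \<sigma> assms(1-4) by (auto intro: mult_nonpos_nonpos mult_nonneg_nonneg)
qed

lemma parity_bias_dual_expansion: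
  "(2*p - 1) ^ k * parity_bias q k J v
    = (\<Sum>\<tau>\<in>dom_k k. dual_coord p k v \<tau> * parity_bias q k J (\<lambda>D. RR_matrix p D \<tau>))"
  unfolding parity_bias_def sum_distrib_left
proof (subst sum.swap, rule sum.cong[OF refl])
  fix D assume D: "D \<in> dom_k k"
  have "(\<Sum>\<tau>\<in>dom_k k. dual_coord p k v \<tau> * (prior_weight q D * RR_matrix p D \<tau> * (-1) ^ parity J D))
      = prior_weight q D * (\<Sum>\<tau>\<in>dom_k k. dual_coord p k v \<tau> * RR_matrix p D \<tau>) * (-1) ^ parity J D"
    by (simp add: sum_distrib_left sum_distrib_right ac_simps)
  then show "(2*p - 1) ^ k * (prior_weight q D * v D * (-1) ^ parity J D)
      = (\<Sum>\<tau>\<in>dom_k k. dual_coord p k v \<tau> * (prior_weight q D * RR_matrix p D \<tau> * (-1) ^ parity J D))"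
    unfolding RR_dual_inversion[OF D] by simp
qed

lemma sign_follows_parity_bias_RR_row:
  assumes p: "1/2 < p" "p \<le> 1" and q: "\<forall>i<k. 0 \<le> q i \<and> q i \<le> 1"
    and qJ: "\<forall>j\<in>J. p \<le> q j \<or> q j \<le> 1 - p"
  shows "sign_follows (parity_bias q k J (\<lambda>_. 1)) (parity_bias q k J (\<lambda>D. RR_matrix p D \<tau>))"
proof -
  define \<sigma> where "\<sigma> i = (if i \<in> J then -1 else 1 :: real)" for i
  have "parity_bias q k J (\<lambda>D. RR_matrix p D \<tau>)
      = parity_bias q k J (\<lambda>D. \<Prod>i<k. flip_weight p (D!i) (\<tau>!i))"
    unfolding parity_bias_def RR_matrix_def by (rule sum.cong) (auto simp: dom_k_def)
  also have "\<dots> = (\<Prod>i<k. q i * flip_weight p True (\<tau>!i) * \<sigma> i + (1 - q i) * flip_weight p False (\<tau>!i))"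
    using parity_bias_prod[of q k J "\<lambda>i a. flip_weight p a (\<tau>!i)"] by (simp add: \<sigma>_def)
  finally have row: "parity_bias q k J (\<lambda>D. RR_matrix p D \<tau>) = \<dots>" .
  have prior: "parity_bias q k J (\<lambda>_. 1) = (\<Prod>i<k. q i * \<sigma> i + (1 - q i))"
    using parity_bias_prod[of q k J "\<lambda>_ _. 1"] by (simp add: \<sigma>_def)
  show ?thesis
    unfolding row prior
    by (rule sign_follows_prod, rule bit_factor_sign) (use p q qJ in \<open>auto simp: \<sigma>_def\<close>)
qed

lemma sign_follows_parity_bias:
  assumes p: "1/2 < p" "p \<le> 1" and q: "\<forall>i<k. 0 \<le> q i \<and> q i \<le> 1"
    and qJ: "\<forall>j\<in>J. p \<le> q j \<or> q j \<le> 1 - p"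
    and dual: "\<forall>\<tau>\<in>dom_k k. 0 \<le> dual_coord p k v \<tau>"
  shows "sign_follows (parity_bias q k J (\<lambda>_. 1)) (parity_bias q k J v)"
proof -
  have "sign_follows (parity_bias q k J (\<lambda>_. 1))
      (\<Sum>\<tau>\<in>dom_k k. dual_coord p k v \<tau> * parity_bias q k J (\<lambda>D. RR_matrix p D \<tau>))"
    using sign_follows_parity_bias_RR_row[OF p q qJ] dual unfolding sign_follows_def
    by (auto intro!: sum_nonneg sum_nonpos mult_nonneg_nonneg mult_nonneg_nonpos)
  moreover have "0 < (2*p - 1) ^ k" using p by simp
  ultimately show ?thesis by (metis parity_bias_dual_expansion sign_follows_mult_pos)
qed

text \<open>For this prior and \<open>J\<close> the set of all positions, \<open>q(D) (-1) ^ parity J D\<close> is \<open>\<plusminus>W(D,\<tau>)\<close>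
  with a sign depending only on \<open>\<tau>\<close>.\<close>
lemma dual_coord_nonneg_if_sign_follows:
  fixes p :: real and \<tau> :: "bool list"
  defines "q \<equiv> \<lambda>i. if \<tau>!i then p else 1 - p"
  assumes p: "1/2 < p" and \<tau>: "\<tau> \<in> dom_k k"
    and follows: "sign_follows (parity_bias q k {..<k} (\<lambda>_. 1)) (parity_bias q k {..<k} v)"
  shows "0 \<le> dual_coord p k v \<tau>"
proof -
  define s where "s = (\<Prod>i<k. if \<tau>!i then -1 else (1::real))"
  have weight: "prior_weight q D * (-1) ^ parity {..<k} D = s * RR_dual p D \<tau>" if "D \<in> dom_k k" for D
  proof -
    have l: "length D = k" using that by (simp add: dom_k_def)
    have "prior_weight q D * (-1) ^ parity {..<k} D
        = (\<Prod>i<k. (if D!i then q i else 1 - q i) * (if D!i then -1 else 1))"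
      unfolding parity_sign_eq_prod[OF l] prior_weight_def l by (simp add: prod.distrib)
    also have "\<dots> = (\<Prod>i<k. (if \<tau>!i then -1 else 1) * dual_flip_weight p (D!i) (\<tau>!i))"
      by (rule prod.cong) (auto simp: q_def dual_flip_weight_def)
    also have "\<dots> = s * RR_dual p D \<tau>" unfolding s_def RR_dual_def l by (simp add: prod.distrib)
    finally show ?thesis .
  qed
  have bias_v: "parity_bias q k {..<k} v = s * dual_coord p k v \<tau>"
    unfolding parity_bias_def dual_coord_def sum_distrib_left
    by (rule sum.cong[OF refl]) (simp add: weight[symmetric] ac_simps)
  have "parity_bias q k {..<k} (\<lambda>_. 1) = (\<Prod>i<k. q i * (if i \<in> {..<k} then -1 else 1) + (1 - q i))"
    using parity_bias_prod[of q k "{..<k}" "\<lambda>_ _. 1"] by simp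
  also have "\<dots> = (\<Prod>i<k. (if \<tau>!i then -1 else 1) * (2*p - 1))"
    by (rule prod.cong) (auto simp: q_def algebra_simps)
  also have "\<dots> = s * (2*p - 1) ^ k"
    unfolding s_def by (simp add: prod.distrib)
  finally have bias_1: "parity_bias q k {..<k} (\<lambda>_. 1) = s * (2*p - 1) ^ k" .
  have "s = 1 \<or> s = -1"
    unfolding s_def by (induction k) (auto simp: prod.lessThan_Suc)
  then show ?thesis
    using follows p unfolding bias_v bias_1 sign_follows_def by auto
qed

lemma parity_guarantee_if_dual_coord_nonneg:
  assumes "1/2 < p" "p \<le> 1"
    and dual: "\<forall>\<omega>\<in>(\<Union>D\<in>dom_k k. set_pmf (M D)). \<forall>\<tau>\<in>dom_k k. 0 \<le> dual_coord p k (\<lambda>D. pmf (M D) \<omega>) \<tau>"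
  shows "parity_guarantee p k M"
  unfolding parity_guarantee_iff_sign_follows
proof (intro allI impI ballI)
  fix q :: "nat \<Rightarrow> real" and J \<omega>
  assume q: "\<forall>i<k. 0 \<le> q i \<and> q i \<le> 1" and qJ: "\<forall>j\<in>J. p \<le> q j \<or> q j \<le> 1 - p"
    and \<omega>: "\<omega> \<in> set_pmf (map_pmf snd (joint q k M))"
  have "\<omega> \<in> (\<Union>D\<in>dom_k k. set_pmf (M D))" using set_pmf_snd_joint_subset[OF q, of M] \<omega> by blast
  then show "sign_follows (parity_bias q k J (\<lambda>_. 1)) (parity_bias q k J (\<lambda>D. pmf (M D) \<omega>))"
    using dual by (intro sign_follows_parity_bias[OF assms(1,2) q qJ]) blast
qed

lemma dual_coord_nonneg_if_parity_guarantee: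
  assumes "1/2 < p" "p < 1" and guarantee: "parity_guarantee p k M"
    and D: "D \<in> dom_k k" "\<omega> \<in> set_pmf (M D)" and \<tau>: "\<tau> \<in> dom_k k"
  shows "0 \<le> dual_coord p k (\<lambda>D. pmf (M D) \<omega>) \<tau>"
proof -
  define q where "q i = (if \<tau>!i then p else 1 - p)" for i
  have "\<forall>i<k. 0 < q i \<and> q i < 1" using assms by (auto simp: q_def)
  from this D have "\<omega> \<in> set_pmf (map_pmf snd (joint q k M))" by (rule set_pmf_snd_joint_interior)
  then have "sign_follows (parity_bias q k {..<k} (\<lambda>_. 1)) (parity_bias q k {..<k} (\<lambda>D. pmf (M D) \<omega>))"
    by (intro guarantee[unfolded parity_guarantee_iff_sign_follows, rule_format])
      (use assms in \<open>auto simp: q_def\<close>)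
  then show ?thesis
    unfolding q_def by (rule dual_coord_nonneg_if_sign_follows[OF assms(1) \<tau>])
qed

theorem theorem5:
  fixes p :: real and k :: nat and M :: "bool list \<Rightarrow> 'b pmf"
  assumes "1/2 < p" and "p < 1"
  shows "(\<forall>\<omega> \<in> (\<Union>D\<in>dom_k k. set_pmf (M D)). (\<lambda>D. pmf (M D) \<omega>) \<in> row_cone p k)
         \<longleftrightarrow> parity_guarantee p k M"
  unfolding row_cone_iff_dual_coord_nonneg[OF assms(1) less_imp_le[OF assms(2)]]
proof
  assume "\<forall>\<omega>\<in>\<Union>D\<in>dom_k k. set_pmf (M D). \<forall>\<tau>\<in>dom_k k. 0 \<le> dual_coord p k (\<lambda>D. pmf (M D) \<omega>) \<tau>"
  then show "parity_guarantee p k M"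
    by (rule parity_guarantee_if_dual_coord_nonneg[OF assms(1) less_imp_le[OF assms(2)]])
next
  assume "parity_guarantee p k M"
  then show "\<forall>\<omega>\<in>\<Union>D\<in>dom_k k. set_pmf (M D). \<forall>\<tau>\<in>dom_k k. 0 \<le> dual_coord p k (\<lambda>D. pmf (M D) \<omega>) \<tau>"
    by (auto intro: dual_coord_nonneg_if_parity_guarantee[OF assms])
qed

end
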